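(* Let $\{x_k\}$ be the sequence of random iterates generated by the GSKM algorithm. With the choice of parameters $0 < \delta < 2$ and $0 \leq \xi \leq 1$, the sequence of iterates $\{x_k\}$ converges and the following results hold: 1. Take $\phi_1 = (1-\xi) h(\delta)$, $\phi_2 = \xi h(\delta)$, $\phi = \frac{-\phi_1+\sqrt{\phi_1^2+4\phi_2}}{2}$ and $\rho = \phi+\phi_1$. Then $\mathbb{E}[d(x_{k+1},P)^2] \leq \rho^{k}(1+\phi)\, d(x_0,P)^2$ and $\mathbb{E}[f(x_k)] \leq \frac{\mu_2(1+\phi)}{2}\rho^{k} d(x_0,P)^2$. 2. With the same $\phi_1,\phi_2,\phi,\rho$ and $R_1 = \frac{1+\phi}{\phi+\rho}$, $R_2 = \frac{1-\rho}{\phi+\rho}$, $R_3 = \frac{\rho+\phi_2}{\phi+\rho}$, $R_4 = \frac{\phi-\phi_2}{\phi+\rho}$, for $k$ even: $\mathbb{E}[d(x_{k+1},P)^2] \leq (R_1\rho^{k+1}+R_2\phi^{k+1})\, d(x_0,P)^2$ and $\mathbb{E}[d(x_k,P)^2] \leq (R_1\rho^{k}-R_2\phi^{k})\, d(x_0,P)^2$; for $k$ odd: $\mathbb{E}[d(x_{k+1},P)^2] \leq (R_3\rho^{k}-R_4\phi^{k})\, d(x_0,P)^2$ and $\mathbb{E}[d(x_k,P)^2] \leq (R_3\rho^{k-1}+R_4\phi^{k-1})\, d(x_0,P)^2$, where $0 \leq \phi,\phi_1,\phi_2 < 1$ and $0 < \rho = \phi+\phi_1 < 1$. 3. The average iterate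 $\tilde{x}_k = \frac{1}{k}\sum_{l=1}^{k} x_l$ satisfies $\mathbb{E}[d(\tilde{x}_k,P)^2] \leq \frac{(1+\phi)\, d(x_0,P)^2}{k(1-\rho)}$ and $\mathbb{E}[f(\tilde{x}_k)] \leq \frac{(1+\xi)\, d(x_0,P)^2}{2\delta k(2-\delta)}$.
   Context: Linear feasibility problem $Ax \leq b$ with $A \in \mathbb{R}^{m\times n}$, $b \in \mathbb{R}^m$, assumed consistent, with rows $a_i^T$ normalized ($\|a_i\|=1$). $P = \{x : Ax \leq b\}$ is the feasible region, $\mathcal{P}(x)$ the Euclidean projection onto $P$ and $d(x,P) = \|x-\mathcal{P}(x)\|$. Sampling: at each iteration a set $\tau$ of $\beta$ rows ($1\le\beta\le m$) is chosen uniformly at random among all $\binom{m}{\beta}$ subsets, and $i^* = \arg\max_{i\in\tau}(a_i^Tx-b_i)^+$; $\mathbb{E}_{\mathbb{S}}$ denotes expectation over this sampling. $f(x) = \mathbb{E}_{\mathbb{S}}\big[\tfrac12 |(a_{i^*}^Tx-b_{i^*})^+|^2\big]$. $L$ is the Hoffman constant, i.e. $d(x,P)^2 \leq L^2\|(Ax-b)^+\|^2$ for all $x$; $\mu_1 = \frac{1}{mL^2}$, $\mu_2 = \min\{1, \frac{\beta}{m}\lambda_{\max}(A^TA)\}$; $\eta = 2\delta-\delta^2$ and $h(\delta) = 1-\eta\mu_1$. GSKM algorithm: start with $x_1 = x_0$, $z_1=z_0$; for $k\ge1$, sample $\tau_k$, pick $i^*$ for $x_k$, set $z_k = x_k - \delta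 (a_{i^*}^Tx_k-b_{i^*})^+ a_{i^*}$ and $x_{k+1} = (1-\xi)z_k + \xi z_{k-1}$. *)

theory Defs
  imports "HOL-Analysis.Analysis" "HOL-Probability.Probability"
begin

text \<open>Linear system A x \<le> b: rows a i (i < m), right-hand sides b i.\<close>

definition resid :: "(nat \<Rightarrow> real^'n) \<Rightarrow> (nat \<Rightarrow> real) \<Rightarrow> real^'n \<Rightarrow> nat \<Rightarrow> real" where
  "resid a b x i = max 0 (a i \<bullet> x - b i)"

definition feas :: "nat \<Rightarrow> (nat \<Rightarrow> real^'n) \<Rightarrow> (nat \<Rightarrow> real) \<Rightarrow> (real^'n) set" where
  "feas m a b = {x. \<forall>i<m. a i \<bullet> x \<le> b i}"

definition subsets_of :: "nat \<Rightarrow> nat \<Rightarrow> nat set set" where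
  "subsets_of m \<beta> = {\<tau>. \<tau> \<subseteq> {..<m} \<and> card \<tau> = \<beta>}"

text \<open>i* = argmax over tau of the positive residual (ties: smallest index).\<close>
definition pick :: "(nat \<Rightarrow> real^'n) \<Rightarrow> (nat \<Rightarrow> real) \<Rightarrow> real^'n \<Rightarrow> nat set \<Rightarrow> nat" where
  "pick a b x \<tau> = (LEAST i. i \<in> \<tau> \<and> (\<forall>j\<in>\<tau>. resid a b x j \<le> resid a b x i))"

definition skm_step :: "(nat \<Rightarrow> real^'n) \<Rightarrow> (nat \<Rightarrow> real) \<Rightarrow> real \<Rightarrow> nat set \<Rightarrow> real^'n \<Rightarrow> real^'n" where
  "skm_step a b \<delta> \<tau> x = x - (\<delta> * resid a b x (pick a b x \<tau>)) *\<^sub>R a (pick a b x \<tau>)"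

text \<open>gskm_Y ts k = (x_{k+1}, z_k) for k \<ge> 1, where tau_k = ts ! (k-1);
  the convention z_0 = z_1 gives x_2 = z_1.\<close>
fun gskm_Y :: "(nat \<Rightarrow> real^'n) \<Rightarrow> (nat \<Rightarrow> real) \<Rightarrow> real \<Rightarrow> real \<Rightarrow> real^'n \<Rightarrow> nat set list
    \<Rightarrow> nat \<Rightarrow> (real^'n) \<times> (real^'n)" where
  "gskm_Y a b \<delta> \<xi> x0 ts 0 = (x0, x0)"
| "gskm_Y a b \<delta> \<xi> x0 ts (Suc k) =
     (let xk = fst (gskm_Y a b \<delta> \<xi> x0 ts k);
          zprev = snd (gskm_Y a b \<delta> \<xi> x0 ts k);
          z = skm_step a b \<delta> (ts ! k) xk;
          zp = (if k = 0 then z else zprev)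
      in ((1 - \<xi>) *\<^sub>R z + \<xi> *\<^sub>R zp, z))"

text \<open>The GSKM iterate x_k (x_0 = x_1 = initial point) as a function of the sampled sets.\<close>
definition gskm_x :: "(nat \<Rightarrow> real^'n) \<Rightarrow> (nat \<Rightarrow> real) \<Rightarrow> real \<Rightarrow> real \<Rightarrow> real^'n \<Rightarrow> nat set list
    \<Rightarrow> nat \<Rightarrow> real^'n" where
  "gskm_x a b \<delta> \<xi> x0 ts k = (if k = 0 then x0 else fst (gskm_Y a b \<delta> \<xi> x0 ts (k - 1)))"

text \<open>Sequences (tau_1,...,tau_N) of independent uniform samples: uniform distribution
  on all length-N lists of beta-subsets.\<close>
definition sample_seqs :: "nat \<Rightarrow> nat \<Rightarrow> nat \<Rightarrow> nat set list set" where
  "sample_seqs m \<beta> N = {ts. length ts = N \<and> set ts \<subseteq> subsets_of m \<beta>}"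

definition Exp :: "nat \<Rightarrow> nat \<Rightarrow> nat \<Rightarrow> (nat set list \<Rightarrow> real) \<Rightarrow> real" where
  "Exp m \<beta> N g = measure_pmf.expectation (pmf_of_set (sample_seqs m \<beta> N)) g"

definition fobj :: "nat \<Rightarrow> nat \<Rightarrow> (nat \<Rightarrow> real^'n) \<Rightarrow> (nat \<Rightarrow> real) \<Rightarrow> real^'n \<Rightarrow> real" where
  "fobj m \<beta> a b x = measure_pmf.expectation (pmf_of_set (subsets_of m \<beta>))
      (\<lambda>\<tau>. (1/2) * (resid a b x (pick a b x \<tau>))\<^sup>2)"

definition AtA :: "nat \<Rightarrow> (nat \<Rightarrow> real^'n) \<Rightarrow> real^'n^'n" where
  "AtA m a = (\<chi> i j. \<Sum>l<m. a l $ i * a l $ j)"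

definition is_eigenvalue :: "real^'n^'n \<Rightarrow> real \<Rightarrow> bool" where
  "is_eigenvalue M c \<longleftrightarrow> (\<exists>v. v \<noteq> 0 \<and> M *v v = c *\<^sub>R v)"

definition lambda_max :: "real^'n^'n \<Rightarrow> real" where
  "lambda_max M = Max {c. is_eigenvalue M c}"

end

theory Submission
  imports Defs
begin

text \<open>One sampling Kaczmarz-Motzkin step from y lowers \<open>d(y,P)\<^sup>2\<close> by \<open>\<eta>\<close> times the squared
  selected residual, i.e. by \<open>2 \<eta> f(y)\<close> on average over the sample, and the Hoffman bound
  \<open>2 f(y) \<ge> \<mu>1 d(y,P)\<^sup>2\<close> turns this into the contraction \<open>E d(z\<^sub>k,P)\<^sup>2 \<le> h E d(x\<^sub>k,P)\<^sup>2\<close>.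
  As \<open>x\<^sub>k\<^sub>+\<^sub>2\<close> is a convex combination of \<open>z\<^sub>k\<^sub>+\<^sub>1\<close> and \<open>z\<^sub>k\<close> and \<open>d(-,P)\<^sup>2\<close> is convex,
  \<open>e\<^sub>k = E d(x\<^sub>k,P)\<^sup>2\<close> satisfies \<open>e\<^sub>k\<^sub>+\<^sub>2 \<le> \<phi>1 e\<^sub>k\<^sub>+\<^sub>1 + \<phi>2 e\<^sub>k\<close>, a recurrence whose characteristic
  roots are \<open>\<rho>\<close> and \<open>-\<phi>\<close>; this gives the geometric rate and the closed-form bounds.
  Summing the descent inequality bounds \<open>\<Sum> E f(x\<^sub>l)\<close> by \<open>(1 + \<xi>) d(x\<^sub>0,P)\<^sup>2 / (2 \<eta>)\<close>,
  and Jensen's inequality carries both bounds over to the averaged iterate.\<close>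

section \<open>Convexity of the distance to the feasible set\<close>

lemma convex_on_power2:
  fixes g :: "'a::real_vector \<Rightarrow> real"
  assumes "convex_on S g" "\<And>x. x \<in> S \<Longrightarrow> 0 \<le> g x"
  shows "convex_on S (\<lambda>x. (g x)\<^sup>2)"
proof (rule convex_onI)
  show "convex S" using convex_on_imp_convex[OF assms(1)] .
  fix t :: real and x y assume t: "0 < t" "t < 1" and xy: "x \<in> S" "y \<in> S"
  have "(1 - t) *\<^sub>R x + t *\<^sub>R y \<in> S" using \<open>convex S\<close> t xy by (simp add: convex_alt)
  hence "(g ((1 - t) *\<^sub>R x + t *\<^sub>R y))\<^sup>2 \<le> ((1 - t) * g x + t * g y)\<^sup>2"
    using convex_onD[OF assms(1), of t x y] t xy assms(2) by (intro power_mono) auto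
  also have "\<dots> \<le> (1 - t) * (g x)\<^sup>2 + t * (g y)\<^sup>2"
  proof -
    have "(1 - t) * (g x)\<^sup>2 + t * (g y)\<^sup>2 - ((1 - t) * g x + t * g y)\<^sup>2 = t * (1 - t) * (g x - g y)\<^sup>2"
      by (simp add: power2_eq_square algebra_simps)
    moreover have "0 \<le> t * (1 - t) * (g x - g y)\<^sup>2" using t by simp
    ultimately show ?thesis by linarith
  qed
  finally show "(g ((1 - t) *\<^sub>R x + t *\<^sub>R y))\<^sup>2 \<le> (1 - t) * (g x)\<^sup>2 + t * (g y)\<^sup>2" .
qed

lemma convex_on_infdist:
  fixes S :: "'a::euclidean_space set"
  assumes "closed S" "convex S" "S \<noteq> {}"
  shows "convex_on UNIV (\<lambda>x. infdist x S)"
proof (rule convex_onI)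
  fix t :: real and x y :: 'a assume t: "0 < t" "t < 1"
  obtain p q where p: "p \<in> S" "infdist x S = dist x p" and q: "q \<in> S" "infdist y S = dist y q"
    using infdist_attains_inf[OF assms(1,3)] by metis
  have "(1 - t) *\<^sub>R p + t *\<^sub>R q \<in> S" using assms(2) p q t by (simp add: convex_alt)
  hence "infdist ((1 - t) *\<^sub>R x + t *\<^sub>R y) S
      \<le> dist ((1 - t) *\<^sub>R x + t *\<^sub>R y) ((1 - t) *\<^sub>R p + t *\<^sub>R q)"
    by (rule infdist_le)
  also have "\<dots> = norm ((1 - t) *\<^sub>R (x - p) + t *\<^sub>R (y - q))"
    by (simp add: dist_norm algebra_simps)
  also have "\<dots> \<le> (1 - t) * dist x p + t * dist y q"
    using norm_triangle_ineq[of "(1 - t) *\<^sub>R (x - p)" "t *\<^sub>R (y - q)"] t by (simp add: dist_norm)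
  finally show "infdist ((1 - t) *\<^sub>R x + t *\<^sub>R y) S \<le> (1 - t) * infdist x S + t * infdist y S"
    using p q by simp
qed simp

lemma convex_on_sum_fun:
  assumes "convex S" "\<And>i. i \<in> I \<Longrightarrow> convex_on S (f i)"
  shows "convex_on S (\<lambda>x. \<Sum>i\<in>I. f i x)"
proof (cases "finite I")
  case True
  thus ?thesis using assms(2)
    by (induction I rule: finite_induct) (auto simp: convex_on_const assms(1))
qed (simp add: convex_on_const assms(1))

lemma feas_eq_Inter: "feas m a b = (\<Inter>i<m. {x. a i \<bullet> x \<le> b i})"
  by (auto simp: feas_def)

lemma closed_feas: "closed (feas m a b)"
  unfolding feas_eq_Inter by (simp add: closed_INT closed_halfspace_le)

lemma convex_feas: "convex (feas m a b)"
  unfolding feas_eq_Inter by (simp add: convex_INT convex_halfspace_le)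

lemma convex_on_infdist_feas_sq:
  "feas m a b \<noteq> {} \<Longrightarrow> convex_on UNIV (\<lambda>x. (infdist x (feas m a b))\<^sup>2)"
  by (intro convex_on_power2 convex_on_infdist closed_feas convex_feas infdist_nonneg)

section \<open>Residuals and the Kaczmarz step\<close>

lemma resid_nonneg [simp]: "0 \<le> resid a b x i"
  by (simp add: resid_def)

lemma pick_arg_max:
  assumes "finite \<tau>" "\<tau> \<noteq> {}"
  shows "pick a b x \<tau> \<in> \<tau> \<and> (\<forall>j\<in>\<tau>. resid a b x j \<le> resid a b x (pick a b x \<tau>))"
proof -
  have "Max ((\<lambda>j. resid a b x j) ` \<tau>) \<in> (\<lambda>j. resid a b x j) ` \<tau>"
    using assms by (intro Max_in) auto
  then obtain i where "i \<in> \<tau>" "resid a b x i = Max ((\<lambda>j. resid a b x j) ` \<tau>)"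
    by auto
  hence "\<exists>i. i \<in> \<tau> \<and> (\<forall>j\<in>\<tau>. resid a b x j \<le> resid a b x i)"
    using assms by auto
  thus ?thesis unfolding pick_def by (rule LeastI_ex)
qed

lemma convex_on_resid:
  fixes a :: "nat \<Rightarrow> real^'n"
  shows "convex_on UNIV (\<lambda>x. resid a b x i)"
proof (rule convex_onI)
  fix t :: real and x y :: "real^'n" assume t: "0 < t" "t < 1"
  have "a i \<bullet> ((1 - t) *\<^sub>R x + t *\<^sub>R y) - b i = (1 - t) * (a i \<bullet> x - b i) + t * (a i \<bullet> y - b i)"
    by (simp add: algebra_simps)
  also have "\<dots> \<le> (1 - t) * resid a b x i + t * resid a b y i"
    using t by (intro add_mono mult_left_mono) (auto simp: resid_def)
  finally show "resid a b ((1 - t) *\<^sub>R x + t *\<^sub>R y) i \<le> (1 - t) * resid a b x i + t * resid a b y i"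
    using t by (simp add: resid_def)
qed simp

lemma convex_on_resid_pick:
  fixes a :: "nat \<Rightarrow> real^'n"
  assumes "finite \<tau>" "\<tau> \<noteq> {}"
  shows "convex_on UNIV (\<lambda>x. resid a b x (pick a b x \<tau>))"
proof (rule convex_onI)
  fix t :: real and x y :: "real^'n" assume t: "0 < t" "t < 1"
  let ?z = "(1 - t) *\<^sub>R x + t *\<^sub>R y"
  let ?i = "pick a b ?z \<tau>"
  have "resid a b ?z ?i \<le> (1 - t) * resid a b x ?i + t * resid a b y ?i"
    using convex_onD[OF convex_on_resid, of t x y] t by simp
  also have "\<dots> \<le> (1 - t) * resid a b x (pick a b x \<tau>) + t * resid a b y (pick a b y \<tau>)"
    using pick_arg_max[OF assms, where x=x] pick_arg_max[OF assms, where x=y]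
      pick_arg_max[OF assms, where x="?z"] t
    by (intro add_mono mult_left_mono) auto
  finally show "resid a b ?z ?i \<le> (1 - t) * resid a b x (pick a b x \<tau>) + t * resid a b y (pick a b y \<tau>)" .
qed simp

lemma resid_le_abs_inner_diff:
  assumes "p \<in> feas m a b" "i < m"
  shows "resid a b y i \<le> \<bar>a i \<bullet> (y - p)\<bar>"
  using assms by (auto simp: resid_def feas_def inner_diff_right)

lemma resid_sq_le_resid_mult_inner_diff:
  assumes "p \<in> feas m a b" "i < m"
  shows "(resid a b y i)\<^sup>2 \<le> resid a b y i * (a i \<bullet> (y - p))"
  using assms by (auto simp: resid_def feas_def inner_diff_right max_def power2_eq_square
      intro!: mult_left_mono)

lemma infdist_skm_step_sq_le:
  assumes ne: "feas m a b \<noteq> {}" and rows: "\<forall>i<m. norm (a i) = 1"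
    and tau: "\<tau> \<subseteq> {..<m}" "\<tau> \<noteq> {}" and "0 \<le> \<delta>"
  shows "(infdist (skm_step a b \<delta> \<tau> y) (feas m a b))\<^sup>2
     \<le> (infdist y (feas m a b))\<^sup>2 - (2 * \<delta> - \<delta>\<^sup>2) * (resid a b y (pick a b y \<tau>))\<^sup>2"
proof -
  let ?P = "feas m a b" and ?i = "pick a b y \<tau>"
  let ?r = "resid a b y ?i"
  have "?i \<in> \<tau>" using pick_arg_max[OF finite_subset[OF tau(1)] tau(2)] by blast
  hence i: "?i < m" using tau by auto
  hence unit: "a ?i \<bullet> a ?i = 1" using rows by (simp add: norm_eq_1)
  obtain p where p: "p \<in> ?P" "infdist y ?P = dist y p"
    using infdist_attains_inf[OF closed_feas ne] by metis
  have "infdist (skm_step a b \<delta> \<tau> y) ?P \<le> dist (skm_step a b \<delta> \<tau> y) p"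
    by (rule infdist_le[OF p(1)])
  also have "\<dots> = norm ((y - p) - (\<delta> * ?r) *\<^sub>R a ?i)"
    by (simp add: skm_step_def dist_norm algebra_simps)
  finally have "infdist (skm_step a b \<delta> \<tau> y) ?P \<le> norm ((y - p) - (\<delta> * ?r) *\<^sub>R a ?i)" .
  hence "(infdist (skm_step a b \<delta> \<tau> y) ?P)\<^sup>2 \<le> (norm ((y - p) - (\<delta> * ?r) *\<^sub>R a ?i))\<^sup>2"
    by (simp add: infdist_nonneg power_mono)
  also have "\<dots> = (norm (y - p))\<^sup>2 - 2 * \<delta> * (?r * (a ?i \<bullet> (y - p))) + \<delta>\<^sup>2 * ?r\<^sup>2"
    unfolding power2_norm_eq_inner using unit
    by (simp add: inner_commute power2_eq_square algebra_simps)
  also have "\<dots> \<le> (norm (y - p))\<^sup>2 - 2 * \<delta> * ?r\<^sup>2 + \<delta>\<^sup>2 * ?r\<^sup>2"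
    using resid_sq_le_resid_mult_inner_diff[OF p(1) i] \<open>0 \<le> \<delta>\<close> by (simp add: mult_left_mono)
  also have "\<dots> = (infdist y ?P)\<^sup>2 - (2 * \<delta> - \<delta>\<^sup>2) * ?r\<^sup>2"
    using p(2) by (simp add: dist_norm algebra_simps)
  finally show ?thesis .
qed

section \<open>Uniformly sampled sets of rows\<close>

lemma subsets_ofD: "\<tau> \<in> subsets_of m \<beta> \<Longrightarrow> \<tau> \<subseteq> {..<m} \<and> finite \<tau> \<and> card \<tau> = \<beta>"
  by (auto simp: subsets_of_def intro: finite_subset)

lemma finite_subsets_of: "finite (subsets_of m \<beta>)"
  unfolding subsets_of_def by (rule finite_subset[of _ "Pow {..<m}"]) auto

lemma card_subsets_of: "card (subsets_of m \<beta>) = m choose \<beta>"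
  unfolding subsets_of_def using n_subsets[of "{..<m}" \<beta>] by simp

lemma card_subsets_of_pos: "\<beta> \<le> m \<Longrightarrow> 0 < card (subsets_of m \<beta>)"
  by (simp add: card_subsets_of)

lemma card_subsets_of_containing:
  assumes "i < m" "1 \<le> \<beta>"
  shows "card {\<tau> \<in> subsets_of m \<beta>. i \<in> \<tau>} = (m - 1) choose (\<beta> - 1)"
proof -
  let ?B = "{B. B \<subseteq> {..<m} - {i} \<and> card B = \<beta> - 1}"
  have fin: "finite B" if "B \<subseteq> {..<m} - {i}" for B
    using that by (rule finite_subset) simp
  have "bij_betw (\<lambda>\<tau>. \<tau> - {i}) {\<tau> \<in> subsets_of m \<beta>. i \<in> \<tau>} ?B"
  proof (rule bij_betw_byWitness[where f' = "insert i"])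
    show "(\<lambda>\<tau>. \<tau> - {i}) ` {\<tau> \<in> subsets_of m \<beta>. i \<in> \<tau>} \<subseteq> ?B"
      by (auto dest!: subsets_ofD)
    show "insert i ` ?B \<subseteq> {\<tau> \<in> subsets_of m \<beta>. i \<in> \<tau>}"
      using assms by (auto simp: subsets_of_def card_insert_if fin)
  qed auto
  hence "card {\<tau> \<in> subsets_of m \<beta>. i \<in> \<tau>} = card ?B" by (rule bij_betw_same_card)
  also have "\<dots> = card ({..<m} - {i}) choose (\<beta> - 1)" by (rule n_subsets) simp
  finally show ?thesis using assms by simp
qed

lemma sum_subsets_of_sum:
  fixes g :: "nat \<Rightarrow> 'a::comm_semiring_1"
  assumes "1 \<le> \<beta>"
  shows "(\<Sum>\<tau>\<in>subsets_of m \<beta>. \<Sum>i\<in>\<tau>. g i) = of_nat ((m - 1) choose (\<beta> - 1)) * (\<Sum>i<m. g i)"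
proof -
  have "sum g \<tau> = (\<Sum>i<m. if i \<in> \<tau> then g i else 0)" if "\<tau> \<in> subsets_of m \<beta>" for \<tau>
  proof -
    have "\<tau> = {..<m} \<inter> \<tau>" using subsets_ofD[OF that] by blast
    thus ?thesis by (metis sum.inter_restrict finite_lessThan)
  qed
  hence "(\<Sum>\<tau>\<in>subsets_of m \<beta>. \<Sum>i\<in>\<tau>. g i) = (\<Sum>\<tau>\<in>subsets_of m \<beta>. \<Sum>i<m. if i \<in> \<tau> then g i else 0)"
    by (rule sum.cong[OF refl])
  also have "\<dots> = (\<Sum>i<m. \<Sum>\<tau>\<in>subsets_of m \<beta>. if i \<in> \<tau> then g i else 0)"
    by (rule sum.swap)
  also have "\<dots> = (\<Sum>i<m. of_nat ((m - 1) choose (\<beta> - 1)) * g i)"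
    using card_subsets_of_containing[OF _ assms]
    by (intro sum.cong refl) (simp add: sum.inter_filter[OF finite_subsets_of, symmetric])
  finally show ?thesis by (simp add: sum_distrib_left)
qed

lemma mean_subsets_of_sum:
  fixes g :: "nat \<Rightarrow> real"
  assumes "1 \<le> \<beta>" "\<beta> \<le> m"
  shows "(\<Sum>\<tau>\<in>subsets_of m \<beta>. \<Sum>i\<in>\<tau>. g i) / card (subsets_of m \<beta>) = \<beta> / m * (\<Sum>i<m. g i)"
proof -
  have "real \<beta> * (m choose \<beta>) = real m * ((m - 1) choose (\<beta> - 1))"
    using binomial_absorption[of "\<beta> - 1" m] assms by (simp flip: of_nat_mult)
  moreover have "0 < m choose \<beta>" using assms by simp
  ultimately show ?thesis
    using assms unfolding sum_subsets_of_sum[OF assms(1)] card_subsets_of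
    by (simp add: field_simps)
qed

lemma fobj_eq_mean:
  assumes "\<beta> \<le> m"
  shows "fobj m \<beta> a b y
    = (\<Sum>\<tau>\<in>subsets_of m \<beta>. (1/2) * (resid a b y (pick a b y \<tau>))\<^sup>2) / card (subsets_of m \<beta>)"
  unfolding fobj_def using assms card_subsets_of_pos[OF assms] finite_subsets_of
  by (intro integral_pmf_of_set) auto

lemma fobj_nonneg: "\<beta> \<le> m \<Longrightarrow> 0 \<le> fobj m \<beta> a b y"
  by (simp add: fobj_eq_mean sum_nonneg)

lemma sum_resid_sq_le_fobj:
  assumes "1 \<le> \<beta>" "\<beta> \<le> m"
  shows "(\<Sum>i<m. (resid a b y i)\<^sup>2) / m \<le> 2 * fobj m \<beta> a b y"
proof -
  let ?U = "subsets_of m \<beta>" and ?r = "\<lambda>\<tau>. resid a b y (pick a b y \<tau>)"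
  have "(\<Sum>i<m. (resid a b y i)\<^sup>2) / m = (\<Sum>\<tau>\<in>?U. (\<Sum>i\<in>\<tau>. (resid a b y i)\<^sup>2) / \<beta>) / card ?U"
    using mean_subsets_of_sum[OF assms, of "\<lambda>i. (resid a b y i)\<^sup>2"] assms card_subsets_of_pos[OF assms(2)]
    by (simp add: sum_divide_distrib[symmetric] divide_simps)
  also have "\<dots> \<le> (\<Sum>\<tau>\<in>?U. (?r \<tau>)\<^sup>2) / card ?U"
  proof (intro divide_right_mono sum_mono)
    fix \<tau> assume "\<tau> \<in> ?U"
    hence \<tau>: "finite \<tau>" "card \<tau> = \<beta>" "\<tau> \<noteq> {}" using assms by (auto dest: subsets_ofD)
    have "(\<Sum>i\<in>\<tau>. (resid a b y i)\<^sup>2) \<le> (\<Sum>i\<in>\<tau>. (?r \<tau>)\<^sup>2)"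
      using pick_arg_max[OF \<tau>(1,3)] by (intro sum_mono power_mono) auto
    thus "(\<Sum>i\<in>\<tau>. (resid a b y i)\<^sup>2) / \<beta> \<le> (?r \<tau>)\<^sup>2" using \<tau> assms by (simp add: field_simps)
  qed simp
  also have "\<dots> = 2 * fobj m \<beta> a b y"
    by (simp add: fobj_eq_mean[OF assms(2)] sum_distrib_left)
  finally show ?thesis .
qed

lemma fobj_le_sum_resid_sq:
  assumes "1 \<le> \<beta>" "\<beta> \<le> m"
  shows "2 * fobj m \<beta> a b y \<le> \<beta> / m * (\<Sum>i<m. (resid a b y i)\<^sup>2)"
proof -
  let ?U = "subsets_of m \<beta>" and ?r = "\<lambda>\<tau>. resid a b y (pick a b y \<tau>)"
  have "2 * fobj m \<beta> a b y = (\<Sum>\<tau>\<in>?U. (?r \<tau>)\<^sup>2) / card ?U"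
    by (simp add: fobj_eq_mean[OF assms(2)] sum_distrib_left)
  also have "\<dots> \<le> (\<Sum>\<tau>\<in>?U. \<Sum>i\<in>\<tau>. (resid a b y i)\<^sup>2) / card ?U"
  proof (intro divide_right_mono sum_mono)
    fix \<tau> assume "\<tau> \<in> ?U"
    hence \<tau>: "finite \<tau>" "\<tau> \<noteq> {}" using assms by (auto dest: subsets_ofD)
    show "(?r \<tau>)\<^sup>2 \<le> (\<Sum>i\<in>\<tau>. (resid a b y i)\<^sup>2)"
      using pick_arg_max[OF \<tau>] \<tau>(1) by (intro member_le_sum) auto
  qed simp
  also have "\<dots> = \<beta> / m * (\<Sum>i<m. (resid a b y i)\<^sup>2)"
    by (rule mean_subsets_of_sum[OF assms])
  finally show ?thesis .
qed

lemma fobj_le_infdist_sq: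
  assumes ne: "feas m a b \<noteq> {}" and rows: "\<forall>i<m. norm (a i) = 1" and "1 \<le> \<beta>" "\<beta> \<le> m"
  shows "2 * fobj m \<beta> a b y \<le> (infdist y (feas m a b))\<^sup>2"
proof -
  let ?U = "subsets_of m \<beta>"
  obtain p where p: "p \<in> feas m a b" "infdist y (feas m a b) = norm (y - p)"
    using infdist_attains_inf[OF closed_feas ne] by (metis dist_norm)
  have "2 * fobj m \<beta> a b y = (\<Sum>\<tau>\<in>?U. (resid a b y (pick a b y \<tau>))\<^sup>2) / card ?U"
    by (simp add: fobj_eq_mean[OF assms(4)] sum_distrib_left)
  also have "\<dots> \<le> (\<Sum>\<tau>\<in>?U. (infdist y (feas m a b))\<^sup>2) / card ?U"
  proof (intro divide_right_mono sum_mono)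
    fix \<tau> assume "\<tau> \<in> ?U"
    hence "\<tau> \<subseteq> {..<m}" "finite \<tau>" "\<tau> \<noteq> {}" using assms by (auto dest: subsets_ofD)
    hence i: "pick a b y \<tau> < m" using pick_arg_max by blast
    have "resid a b y (pick a b y \<tau>) \<le> \<bar>a (pick a b y \<tau>) \<bullet> (y - p)\<bar>"
      by (rule resid_le_abs_inner_diff[OF p(1) i])
    also have "\<dots> \<le> norm (y - p)"
      using Cauchy_Schwarz_ineq2[of "a (pick a b y \<tau>)" "y - p"] rows i by simp
    finally show "(resid a b y (pick a b y \<tau>))\<^sup>2 \<le> (infdist y (feas m a b))\<^sup>2"
      using p(2) by (simp add: power_mono)
  qed simp
  also have "\<dots> = (infdist y (feas m a b))\<^sup>2" using card_subsets_of_pos[OF assms(4)] by simp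
  finally show ?thesis .
qed

lemma convex_on_fobj:
  fixes a :: "nat \<Rightarrow> real^'n"
  assumes "1 \<le> \<beta>" "\<beta> \<le> m"
  shows "convex_on UNIV (fobj m \<beta> a b)"
proof -
  have summand: "convex_on UNIV (\<lambda>y. (1/2) * (resid a b y (pick a b y \<tau>))\<^sup>2 / card (subsets_of m \<beta>))"
    if "\<tau> \<in> subsets_of m \<beta>" for \<tau>
  proof -
    have "finite \<tau>" "\<tau> \<noteq> {}" using that assms by (auto dest: subsets_ofD)
    thus ?thesis
      by (intro convex_on_cdiv convex_on_cmul convex_on_power2 convex_on_resid_pick) auto
  qed
  have "convex_on UNIV (\<lambda>y. \<Sum>\<tau>\<in>subsets_of m \<beta>. (1/2) * (resid a b y (pick a b y \<tau>))\<^sup>2 / card (subsets_of m \<beta>))"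
    by (rule convex_on_sum_fun[OF convex_UNIV summand])
  moreover have "fobj m \<beta> a b
      = (\<lambda>y. \<Sum>\<tau>\<in>subsets_of m \<beta>. (1/2) * (resid a b y (pick a b y \<tau>))\<^sup>2 / card (subsets_of m \<beta>))"
    by (rule ext) (simp add: fobj_eq_mean[OF assms(2)] sum_divide_distrib)
  ultimately show ?thesis by simp
qed

lemma mean_infdist_skm_step_sq_le:
  assumes ne: "feas m a b \<noteq> {}" and rows: "\<forall>i<m. norm (a i) = 1"
    and "1 \<le> \<beta>" "\<beta> \<le> m" and "0 \<le> \<delta>"
  shows "(\<Sum>\<tau>\<in>subsets_of m \<beta>. (infdist (skm_step a b \<delta> \<tau> y) (feas m a b))\<^sup>2) / card (subsets_of m \<beta>)
    \<le> (infdist y (feas m a b))\<^sup>2 - (2 * \<delta> - \<delta>\<^sup>2) * (2 * fobj m \<beta> a b y)"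
proof -
  let ?U = "subsets_of m \<beta>" and ?d = "(infdist y (feas m a b))\<^sup>2" and ?\<eta> = "2 * \<delta> - \<delta>\<^sup>2"
  have "(\<Sum>\<tau>\<in>?U. (infdist (skm_step a b \<delta> \<tau> y) (feas m a b))\<^sup>2) / card ?U
     \<le> (\<Sum>\<tau>\<in>?U. ?d - ?\<eta> * (resid a b y (pick a b y \<tau>))\<^sup>2) / card ?U"
  proof (intro divide_right_mono sum_mono)
    fix \<tau> assume "\<tau> \<in> ?U"
    hence "\<tau> \<subseteq> {..<m}" "\<tau> \<noteq> {}" using assms by (auto dest: subsets_ofD)
    thus "(infdist (skm_step a b \<delta> \<tau> y) (feas m a b))\<^sup>2 \<le> ?d - ?\<eta> * (resid a b y (pick a b y \<tau>))\<^sup>2"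
      using infdist_skm_step_sq_le[OF ne rows] \<open>0 \<le> \<delta>\<close> by blast
  qed simp
  also have "\<dots> = ?d - ?\<eta> * (2 * fobj m \<beta> a b y)"
    using card_subsets_of_pos[OF assms(4)]
    by (simp add: fobj_eq_mean[OF assms(4)] sum_subtractf sum_distrib_left[symmetric]
        diff_divide_distrib sum_divide_distrib[symmetric])
  finally show ?thesis .
qed

section \<open>The largest eigenvalue of a symmetric matrix\<close>

lemma quadratic_nonneg_imp_linear_coeff_zero:
  fixes c e :: real
  assumes "\<And>t. 0 \<le> 2 * t * c + t\<^sup>2 * e"
  shows "c = 0"
proof (rule ccontr)
  assume "c \<noteq> 0"
  define s where "s = \<bar>e\<bar> + 1"
  define t where "t = - c / s"
  have "s > 0" unfolding s_def by simp
  hence "2 * t * c + t\<^sup>2 * e = c\<^sup>2 * (e - 2 * s) / s\<^sup>2"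
    unfolding t_def by (simp add: field_simps power2_eq_square)
  also have "\<dots> < 0"
    using \<open>c \<noteq> 0\<close> \<open>s > 0\<close> unfolding s_def by (intro divide_neg_pos mult_pos_neg) auto
  finally show False using assms[of t] by simp
qed

lemma inner_matrix_vector_mult_symmetric:
  fixes M :: "real^'n^'n"
  assumes "transpose M = M"
  shows "x \<bullet> (M *v y) = y \<bullet> (M *v x)"
proof -
  have "x \<bullet> (M *v y) = (x v* M) \<bullet> y" by (simp add: dot_lmul_matrix)
  also have "x v* M = M *v x" by (metis assms vector_transpose_matrix)
  finally show ?thesis by (simp add: inner_commute)
qed

lemma finite_eigenvalues_symmetric:
  fixes M :: "real^'n^'n"
  assumes "transpose M = M"
  shows "finite {c. is_eigenvalue M c}"
proof -
  let ?S = "{c. is_eigenvalue M c}"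
  have "\<forall>c\<in>?S. \<exists>v. v \<noteq> 0 \<and> M *v v = c *\<^sub>R v" by (simp add: is_eigenvalue_def)
  then obtain ev where ev: "\<And>c. c \<in> ?S \<Longrightarrow> ev c \<noteq> 0 \<and> M *v ev c = c *\<^sub>R ev c"
    by metis
  have orth: "ev c \<bullet> ev d = 0" if "c \<in> ?S" "d \<in> ?S" "c \<noteq> d" for c d
  proof -
    have "d * (ev c \<bullet> ev d) = c * (ev c \<bullet> ev d)"
      using inner_matrix_vector_mult_symmetric[OF assms, of "ev c" "ev d"] ev[OF that(1)] ev[OF that(2)]
      by (simp add: inner_commute)
    thus ?thesis using that(3) by simp
  qed
  have "inj_on ev ?S"
    by (rule inj_onI) (metis ev orth inner_eq_zero_iff)
  moreover have "independent (ev ` ?S)"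
    using orth ev by (intro pairwise_orthogonal_independent) (auto simp: pairwise_def orthogonal_def)
  hence "finite (ev ` ?S)" using independent_bound by blast
  ultimately show ?thesis using finite_imageD by blast
qed

text \<open>The maximum c of the Rayleigh quotient is attained at a unit vector v; since
  \<open>q(v + t w) \<le> c \<parallel>v + t w\<parallel>\<^sup>2\<close> for all t, with equality at \<open>t = 0\<close>, the first-order
  term vanishes, which says \<open>M v = c v\<close>.\<close>
lemma symmetric_quadratic_form_le_eigenvalue:
  fixes M :: "real^'n^'n"
  assumes sym: "transpose M = M"
  obtains c where "is_eigenvalue M c" "\<And>w. w \<bullet> (M *v w) \<le> c * (norm w)\<^sup>2"
proof -
  let ?q = "\<lambda>v. v \<bullet> (M *v v)"
  have "continuous_on (sphere 0 1) (\<lambda>v. M *v v)"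
    by (rule linear_continuous_on[OF matrix_vector_mul_bounded_linear])
  hence cont: "continuous_on (sphere 0 1) ?q"
    by (intro continuous_on_inner continuous_on_id)
  obtain u :: "real^'n" where "norm u = 1" using vector_choose_size[of 1] by auto
  hence "sphere (0::real^'n) 1 \<noteq> {}" by auto
  then obtain v where "v \<in> sphere 0 1" "\<forall>w\<in>sphere 0 1. ?q w \<le> ?q v"
    using continuous_attains_sup[OF compact_sphere _ cont] by blast
  hence v: "norm v = 1" "\<And>w. norm w = 1 \<Longrightarrow> ?q w \<le> ?q v" by auto
  define c where "c = ?q v"
  have bound: "?q w \<le> c * (norm w)\<^sup>2" for w
  proof (cases "w = 0")
    case False
    have "?q ((1 / norm w) *\<^sub>R w) \<le> c" unfolding c_def using False by (intro v(2)) simp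
    hence "?q w / (norm w)\<^sup>2 \<le> c"
      by (simp add: matrix_vector_mult_scaleR power2_eq_square divide_simps)
    thus ?thesis using False by (simp add: divide_simps)
  qed simp
  have first_order: "c * (v \<bullet> w) = w \<bullet> (M *v v)" for w
  proof -
    have "0 \<le> 2 * t * (c * (v \<bullet> w) - w \<bullet> (M *v v)) + t\<^sup>2 * (c * (norm w)\<^sup>2 - ?q w)" for t
    proof -
      have "?q (v + t *\<^sub>R w) = c + 2 * t * (w \<bullet> (M *v v)) + t\<^sup>2 * ?q w"
        using inner_matrix_vector_mult_symmetric[OF sym, of v w]
        by (simp add: c_def algebra_simps power2_eq_square)
      moreover have "(norm (v + t *\<^sub>R w))\<^sup>2 = 1 + 2 * t * (v \<bullet> w) + t\<^sup>2 * (norm w)\<^sup>2"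
        using v(1) unfolding power2_norm_eq_inner
        by (simp add: norm_eq_1 inner_commute algebra_simps power2_eq_square)
      ultimately show ?thesis using bound[of "v + t *\<^sub>R w"] by (simp add: algebra_simps)
    qed
    from quadratic_nonneg_imp_linear_coeff_zero[OF this] show ?thesis by simp
  qed
  have "M *v v = c *\<^sub>R v"
  proof -
    let ?u = "c *\<^sub>R v - M *v v"
    have "?u \<bullet> ?u = 0"
      using first_order[of ?u] by (simp add: inner_diff_left inner_commute)
    thus ?thesis by simp
  qed
  hence "is_eigenvalue M c" unfolding is_eigenvalue_def using v(1) by (intro exI[of _ v]) auto
  thus thesis using bound that by blast
qed

lemma quadratic_form_le_lambda_max:
  fixes M :: "real^'n^'n"
  assumes "transpose M = M"
  shows "w \<bullet> (M *v w) \<le> lambda_max M * (norm w)\<^sup>2"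
proof -
  obtain c where c: "is_eigenvalue M c" "\<And>w. w \<bullet> (M *v w) \<le> c * (norm w)\<^sup>2"
    using symmetric_quadratic_form_le_eigenvalue[OF assms] by blast
  have "c \<le> lambda_max M"
    unfolding lambda_max_def using c(1) finite_eigenvalues_symmetric[OF assms] by (intro Max_ge) auto
  hence "c * (norm w)\<^sup>2 \<le> lambda_max M * (norm w)\<^sup>2" by (simp add: mult_right_mono)
  thus ?thesis using c(2)[of w] by linarith
qed

lemma lambda_max_nonneg:
  fixes M :: "real^'n^'n"
  assumes "transpose M = M" "\<And>v. 0 \<le> v \<bullet> (M *v v)"
  shows "0 \<le> lambda_max M"
proof -
  obtain w :: "real^'n" where "norm w = 1" using vector_choose_size[of 1] by auto
  thus ?thesis using quadratic_form_le_lambda_max[OF assms(1), of w] assms(2)[of w] by simp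
qed

lemma AtA_mult: "AtA m a *v v = (\<Sum>l<m. (a l \<bullet> v) *\<^sub>R a l)"
proof (subst vec_eq_iff, intro allI)
  fix i
  have "(AtA m a *v v) $ i = (\<Sum>j\<in>UNIV. \<Sum>l<m. a l $ i * (a l $ j * v $ j))"
    by (simp add: AtA_def matrix_vector_mult_def sum_distrib_right mult.assoc)
  also have "\<dots> = (\<Sum>l<m. \<Sum>j\<in>UNIV. a l $ i * (a l $ j * v $ j))" by (rule sum.swap)
  also have "\<dots> = (\<Sum>l<m. (a l \<bullet> v) * a l $ i)"
    by (simp add: inner_vec_def sum_distrib_left sum_distrib_right mult.commute)
  finally show "(AtA m a *v v) $ i = (\<Sum>l<m. (a l \<bullet> v) *\<^sub>R a l) $ i" by simp
qed

lemma transpose_AtA: "transpose (AtA m a) = AtA m a"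
  by (simp add: vec_eq_iff AtA_def transpose_def mult.commute)

lemma inner_AtA_mult: "w \<bullet> (AtA m a *v w) = (\<Sum>l<m. (a l \<bullet> w)\<^sup>2)"
  by (simp add: AtA_mult inner_sum_right inner_commute power2_eq_square)

lemma lambda_max_AtA_nonneg: "0 \<le> lambda_max (AtA m a)"
  by (rule lambda_max_nonneg[OF transpose_AtA]) (simp add: inner_AtA_mult sum_nonneg)

lemma fobj_le_lambda_max_infdist_sq:
  assumes ne: "feas m a b \<noteq> {}" and "1 \<le> \<beta>" "\<beta> \<le> m"
  shows "2 * fobj m \<beta> a b y \<le> \<beta> / m * lambda_max (AtA m a) * (infdist y (feas m a b))\<^sup>2"
proof -
  obtain p where p: "p \<in> feas m a b" "infdist y (feas m a b) = norm (y - p)"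
    using infdist_attains_inf[OF closed_feas ne] by (metis dist_norm)
  have "(\<Sum>i<m. (resid a b y i)\<^sup>2) \<le> (\<Sum>i<m. (a i \<bullet> (y - p))\<^sup>2)"
  proof (rule sum_mono)
    fix i assume "i \<in> {..<m}"
    thus "(resid a b y i)\<^sup>2 \<le> (a i \<bullet> (y - p))\<^sup>2"
      using power_mono[OF resid_le_abs_inner_diff[OF p(1)] resid_nonneg, of i y 2] by simp
  qed
  also have "\<dots> \<le> lambda_max (AtA m a) * (infdist y (feas m a b))\<^sup>2"
    using quadratic_form_le_lambda_max[OF transpose_AtA, of "y - p"] p(2) by (simp add: inner_AtA_mult)
  finally have "\<beta> / m * (\<Sum>i<m. (resid a b y i)\<^sup>2) \<le> \<beta> / m * lambda_max (AtA m a) * (infdist y (feas m a b))\<^sup>2"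
    using mult_left_mono[of _ _ "real \<beta> / real m"] by (simp add: mult.assoc)
  thus ?thesis using fobj_le_sum_resid_sq[OF assms(2,3)] by (rule order_trans[rotated])
qed

section \<open>Expectation over sample sequences and the GSKM iterates\<close>

lemma sample_seqs_eq: "sample_seqs m \<beta> N = {ts. set ts \<subseteq> subsets_of m \<beta> \<and> length ts = N}"
  by (auto simp: sample_seqs_def)

lemma finite_sample_seqs: "finite (sample_seqs m \<beta> N)"
  by (simp add: sample_seqs_eq finite_lists_length_eq finite_subsets_of)

lemma card_sample_seqs: "card (sample_seqs m \<beta> N) = card (subsets_of m \<beta>) ^ N"
  by (simp add: sample_seqs_eq card_lists_length_eq finite_subsets_of)

lemma sample_seqs_Suc:
  "sample_seqs m \<beta> (Suc N) = (\<lambda>(ts, t). ts @ [t]) ` (sample_seqs m \<beta> N \<times> subsets_of m \<beta>)"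
  by (force simp: sample_seqs_def length_Suc_conv_rev)

lemma Exp_eq_mean:
  assumes "\<beta> \<le> m"
  shows "Exp m \<beta> N g = (\<Sum>ts\<in>sample_seqs m \<beta> N. g ts) / card (sample_seqs m \<beta> N)"
proof -
  have "sample_seqs m \<beta> N \<noteq> {}"
    using card_subsets_of_pos[OF assms] by (metis card_sample_seqs card.empty zero_less_power less_irrefl)
  thus ?thesis unfolding Exp_def by (intro integral_pmf_of_set finite_sample_seqs)
qed

lemma Exp_mono:
  assumes "\<beta> \<le> m" "\<And>ts. ts \<in> sample_seqs m \<beta> N \<Longrightarrow> g ts \<le> h ts"
  shows "Exp m \<beta> N g \<le> Exp m \<beta> N h"
  unfolding Exp_eq_mean[OF assms(1)] using assms(2) by (intro divide_right_mono sum_mono) auto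

lemma Exp_const: "\<beta> \<le> m \<Longrightarrow> Exp m \<beta> N (\<lambda>_. c) = c"
  by (simp add: Exp_eq_mean card_sample_seqs card_subsets_of_pos)

lemma Exp_cmult: "\<beta> \<le> m \<Longrightarrow> Exp m \<beta> N (\<lambda>ts. c * g ts) = c * Exp m \<beta> N g"
  by (simp add: Exp_eq_mean sum_distrib_left)

lemma Exp_diff: "\<beta> \<le> m \<Longrightarrow> Exp m \<beta> N (\<lambda>ts. g ts - h ts) = Exp m \<beta> N g - Exp m \<beta> N h"
  by (simp add: Exp_eq_mean sum_subtractf diff_divide_distrib)

lemma Exp_add: "\<beta> \<le> m \<Longrightarrow> Exp m \<beta> N (\<lambda>ts. g ts + h ts) = Exp m \<beta> N g + Exp m \<beta> N h"
  by (simp add: Exp_eq_mean sum.distrib add_divide_distrib)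

lemma Exp_sum: "\<beta> \<le> m \<Longrightarrow> Exp m \<beta> N (\<lambda>ts. \<Sum>l\<in>I. g l ts) = (\<Sum>l\<in>I. Exp m \<beta> N (g l))"
  by (simp add: Exp_eq_mean sum.swap[of _ I] sum_divide_distrib)

text \<open>Conditioning on the first N samples: the last one is uniform and independent of them.\<close>
lemma Exp_Suc_eq:
  assumes "\<beta> \<le> m"
    and G: "\<And>ts t. length ts = N \<Longrightarrow> t \<in> subsets_of m \<beta> \<Longrightarrow> g (ts @ [t]) = G ts t"
  shows "Exp m \<beta> (Suc N) g
    = Exp m \<beta> N (\<lambda>ts. (\<Sum>t\<in>subsets_of m \<beta>. G ts t) / card (subsets_of m \<beta>))"
proof -
  let ?U = "subsets_of m \<beta>" and ?S = "sample_seqs m \<beta> N"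
  have "(\<Sum>ts\<in>sample_seqs m \<beta> (Suc N). g ts) = (\<Sum>(ts, t)\<in>?S \<times> ?U. g (ts @ [t]))"
    unfolding sample_seqs_Suc by (subst sum.reindex) (auto intro: inj_onI simp: case_prod_beta)
  also have "\<dots> = (\<Sum>ts\<in>?S. \<Sum>t\<in>?U. G ts t)"
    by (simp add: sum.cartesian_product[symmetric] G sample_seqs_def)
  finally show ?thesis
    unfolding Exp_eq_mean[OF assms(1)] card_sample_seqs
    by (simp add: sum_divide_distrib[symmetric] field_simps)
qed

lemma Exp_prefix:
  assumes "\<beta> \<le> m" "M \<le> N" "\<And>ts t. M \<le> length ts \<Longrightarrow> g (ts @ [t]) = g ts"
  shows "Exp m \<beta> N g = Exp m \<beta> M g"
  using assms(2)
proof (induction N)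
  case (Suc N)
  show ?case
  proof (cases "M = Suc N")
    case False
    hence "M \<le> N" using Suc.prems by simp
    hence "Exp m \<beta> (Suc N) g = Exp m \<beta> N (\<lambda>ts. (\<Sum>t\<in>subsets_of m \<beta>. g ts) / card (subsets_of m \<beta>))"
      by (intro Exp_Suc_eq assms(1,3)) auto
    also have "\<dots> = Exp m \<beta> N g" using card_subsets_of_pos[OF assms(1)] by simp
    finally show ?thesis using Suc.IH \<open>M \<le> N\<close> by simp
  qed simp
qed simp

definition gskm_z :: "(nat \<Rightarrow> real^'n) \<Rightarrow> (nat \<Rightarrow> real) \<Rightarrow> real \<Rightarrow> real \<Rightarrow> real^'n \<Rightarrow> nat set list
    \<Rightarrow> nat \<Rightarrow> real^'n" where
  "gskm_z a b \<delta> \<xi> x0 ts k = skm_step a b \<delta> (ts ! (k - 1)) (gskm_x a b \<delta> \<xi> x0 ts k)"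

lemma gskm_Y_cong:
  "(\<And>i. i < n \<Longrightarrow> ts ! i = ts' ! i) \<Longrightarrow> gskm_Y a b \<delta> \<xi> x0 ts n = gskm_Y a b \<delta> \<xi> x0 ts' n"
  by (induction n) (simp_all add: Let_def)

lemma gskm_x_append:
  assumes "k \<le> length ts + 1"
  shows "gskm_x a b \<delta> \<xi> x0 (ts @ [t]) k = gskm_x a b \<delta> \<xi> x0 ts k"
proof -
  have "gskm_Y a b \<delta> \<xi> x0 (ts @ [t]) (k - 1) = gskm_Y a b \<delta> \<xi> x0 ts (k - 1)"
    using assms by (intro gskm_Y_cong) (simp add: nth_append less_diff_conv)
  thus ?thesis by (simp add: gskm_x_def)
qed

lemma gskm_z_append:
  "1 \<le> k \<Longrightarrow> k \<le> length ts \<Longrightarrow> gskm_z a b \<delta> \<xi> x0 (ts @ [t]) k = gskm_z a b \<delta> \<xi> x0 ts k"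
  by (auto simp: gskm_z_def gskm_x_append nth_append)

lemma gskm_x_Suc_Suc:
  "gskm_x a b \<delta> \<xi> x0 ts (n + 2)
    = (1 - \<xi>) *\<^sub>R gskm_z a b \<delta> \<xi> x0 ts (n + 1) + \<xi> *\<^sub>R gskm_z a b \<delta> \<xi> x0 ts (max 1 n)"
proof (cases n)
  case 0
  thus ?thesis by (simp add: gskm_x_def gskm_z_def Let_def)
next
  case (Suc j)
  thus ?thesis by (simp add: gskm_x_def gskm_z_def Let_def)
qed

lemma Exp_gskm_x_prefix:
  assumes "\<beta> \<le> m" "l \<le> M + 1" "M \<le> N"
  shows "Exp m \<beta> N (\<lambda>ts. G (gskm_x a b \<delta> \<xi> x0 ts l)) = Exp m \<beta> M (\<lambda>ts. G (gskm_x a b \<delta> \<xi> x0 ts l))"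
  using assms by (intro Exp_prefix) (auto simp: gskm_x_append)

lemma Exp_gskm_z_prefix:
  assumes "\<beta> \<le> m" "1 \<le> l" "l \<le> M" "M \<le> N"
  shows "Exp m \<beta> N (\<lambda>ts. G (gskm_z a b \<delta> \<xi> x0 ts l)) = Exp m \<beta> M (\<lambda>ts. G (gskm_z a b \<delta> \<xi> x0 ts l))"
  using assms by (intro Exp_prefix) (auto simp: gskm_z_append)

section \<open>Second-order linear recurrences\<close>

lemma gskm_rate_constants:
  fixes h \<xi> :: real
  assumes h: "0 < h" "h < 1" and \<xi>: "0 \<le> \<xi>" "\<xi> \<le> 1"
  defines "\<phi>1 \<equiv> (1 - \<xi>) * h"
  defines "\<phi>2 \<equiv> \<xi> * h"
  defines "\<phi> \<equiv> (- \<phi>1 + sqrt (\<phi>1\<^sup>2 + 4 * \<phi>2)) / 2"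
  defines "\<rho> \<equiv> \<phi> + \<phi>1"
  shows "0 \<le> \<phi> \<and> \<phi> < 1 \<and> 0 \<le> \<phi>1 \<and> \<phi>1 < 1 \<and> 0 \<le> \<phi>2 \<and> \<phi>2 < 1 \<and> 0 < \<rho> \<and> \<rho> < 1
    \<and> \<phi> * \<rho> = \<phi>2"
proof -
  define s where "s = sqrt (\<phi>1\<^sup>2 + 4 * \<phi>2)"
  have \<phi>1: "0 \<le> \<phi>1" "\<phi>1 \<le> h" unfolding \<phi>1_def using h \<xi> by (auto intro: mult_left_le_one_le)
  have \<phi>2: "0 \<le> \<phi>2" "\<phi>2 \<le> h" unfolding \<phi>2_def using h \<xi> by (auto intro: mult_left_le_one_le)
  have sum: "\<phi>1 + \<phi>2 = h" unfolding \<phi>1_def \<phi>2_def by (simp add: algebra_simps)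
  have s2: "s\<^sup>2 = \<phi>1\<^sup>2 + 4 * \<phi>2" unfolding s_def using \<phi>2 by simp
  have "\<phi>1 \<le> s" unfolding s_def using \<phi>1 \<phi>2 by (intro real_le_rsqrt) simp
  moreover have "s < 2 - \<phi>1"
    unfolding s_def using sum h \<phi>1 by (intro real_less_lsqrt) (auto simp: power2_eq_square algebra_simps)
  moreover have "0 < \<phi>1\<^sup>2 + 4 * \<phi>2"
    using sum h \<phi>1 \<phi>2 by (cases "\<phi>1 = 0") (auto intro: add_pos_nonneg)
  hence "0 < s + \<phi>1" unfolding s_def using \<phi>1 by (simp add: add_pos_nonneg)
  moreover have \<phi>: "\<phi> = (s - \<phi>1) / 2" and \<rho>: "\<rho> = (s + \<phi>1) / 2"
    unfolding \<rho>_def \<phi>_def s_def by (simp_all add: field_simps)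
  moreover have "\<phi> * \<rho> = \<phi>2"
    unfolding \<phi> \<rho> using s2 by (simp add: power2_eq_square algebra_simps)
  ultimately show ?thesis using \<phi>1 \<phi>2 h by auto
qed

lemma linear_recurrence_geometric_bound:
  fixes X :: "nat \<Rightarrow> real"
  assumes "0 \<le> \<phi>" "0 \<le> \<rho>" "\<rho> = \<phi> + \<phi>1" "\<phi> * \<rho> = \<phi>2" and nonneg: "\<And>n. 0 \<le> X n"
    and "X 0 \<le> c" "X 1 \<le> c" and rec: "\<And>n. X (n + 2) \<le> \<phi>1 * X (n + 1) + \<phi>2 * X n"
  shows "X (n + 1) \<le> \<rho> ^ n * (1 + \<phi>) * c"
proof -
  have "X (n + 1) + \<phi> * X n \<le> \<rho> ^ n * (1 + \<phi>) * c"
  proof (induction n)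
    case 0
    show ?case using assms(7) mult_left_mono[OF assms(6,1)] by (simp add: algebra_simps)
  next
    case (Suc n)
    have "\<phi>2 * X n = \<rho> * (\<phi> * X n)" using assms(4) by (metis mult.assoc mult.commute)
    hence "X (n + 2) + \<phi> * X (n + 1) \<le> \<rho> * (X (n + 1) + \<phi> * X n)"
      using rec[of n] assms(3) by (simp add: algebra_simps)
    also have "\<dots> \<le> \<rho> * (\<rho> ^ n * (1 + \<phi>) * c)" using Suc.IH assms(2) by (rule mult_left_mono)
    finally show ?case by (simp add: algebra_simps)
  qed
  moreover have "0 \<le> \<phi> * X n" using assms(1) nonneg by simp
  ultimately show ?thesis by linarith
qed

text \<open>\<open>\<rho>\<close> and \<open>-\<phi>\<close> are the roots of \<open>t\<^sup>2 = \<phi>1 t + \<phi>2\<close>; the bound is the solution of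
  the recurrence with equality and \<open>X 0 = X 1 = c\<close>.\<close>
lemma linear_recurrence_closed_form_bound:
  fixes X :: "nat \<Rightarrow> real"
  assumes "0 \<le> \<phi>1" "0 \<le> \<phi>2" "0 < \<phi> + \<rho>" "\<rho> = \<phi> + \<phi>1" "\<phi> * \<rho> = \<phi>2"
    and "X 0 \<le> c" "X 1 \<le> c" and rec: "\<And>n. X (n + 2) \<le> \<phi>1 * X (n + 1) + \<phi>2 * X n"
  shows "X n \<le> ((1 + \<phi>) / (\<phi> + \<rho>) * \<rho> ^ n - (1 - \<rho>) / (\<phi> + \<rho>) * (- \<phi>) ^ n) * c"
proof -
  define A B where "A = (1 + \<phi>) / (\<phi> + \<rho>)" and "B = (1 - \<rho>) / (\<phi> + \<rho>)"
  define S where "S n = (A * \<rho> ^ n - B * (- \<phi>) ^ n) * c" for n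
  have root: "r ^ (n + 2) = \<phi>1 * r ^ (n + 1) + \<phi>2 * r ^ n" if "r\<^sup>2 = \<phi>1 * r + \<phi>2" for r n
  proof -
    have "r ^ (n + 2) = r ^ n * r\<^sup>2" by (simp add: power_add power2_eq_square)
    also have "\<dots> = \<phi>1 * r ^ (n + 1) + \<phi>2 * r ^ n" using that by (simp add: algebra_simps)
    finally show ?thesis .
  qed
  have "\<rho>\<^sup>2 = \<phi>1 * \<rho> + \<phi>2" "(- \<phi>)\<^sup>2 = \<phi>1 * (- \<phi>) + \<phi>2"
    using assms(4,5) by (simp_all add: power2_eq_square algebra_simps)
  hence S_rec: "S (n + 2) = \<phi>1 * S (n + 1) + \<phi>2 * S n" for n
    unfolding S_def root[OF \<open>\<rho>\<^sup>2 = _\<close>] root[OF \<open>(- \<phi>)\<^sup>2 = _\<close>] by (simp add: algebra_simps)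
  have nz: "\<phi> + \<rho> \<noteq> 0" using assms(3) by simp
  have "A - B = ((1 + \<phi>) - (1 - \<rho>)) / (\<phi> + \<rho>)"
    unfolding A_def B_def by (rule diff_divide_distrib[symmetric])
  hence "A - B = 1" using nz by simp
  have "A * \<rho> + B * \<phi> = (1 + \<phi>) * \<rho> / (\<phi> + \<rho>) + (1 - \<rho>) * \<phi> / (\<phi> + \<rho>)"
    unfolding A_def B_def by simp
  also have "\<dots> = ((1 + \<phi>) * \<rho> + (1 - \<rho>) * \<phi>) / (\<phi> + \<rho>)"
    by (rule add_divide_distrib[symmetric])
  also have "(1 + \<phi>) * \<rho> + (1 - \<rho>) * \<phi> = \<phi> + \<rho>" by (simp add: algebra_simps)
  finally have "A * \<rho> + B * \<phi> = 1" using nz by simp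
  hence "S 0 = c" "S 1 = c" using \<open>A - B = 1\<close> unfolding S_def by simp_all
  have "X n \<le> S n \<and> X (n + 1) \<le> S (n + 1)"
  proof (induction n)
    case 0
    show ?case using \<open>S 0 = c\<close> \<open>S 1 = c\<close> assms(6,7) by simp
  next
    case (Suc n)
    have "X (n + 2) \<le> \<phi>1 * X (n + 1) + \<phi>2 * X n" by (rule rec)
    also have "\<dots> \<le> \<phi>1 * S (n + 1) + \<phi>2 * S n"
      using Suc.IH assms(1,2) by (intro add_mono mult_left_mono) auto
    finally have "X (n + 2) \<le> \<phi>1 * S (n + 1) + \<phi>2 * S n" .
    thus ?case using Suc.IH S_rec[of n] by simp
  qed
  thus ?thesis unfolding S_def A_def B_def by simp
qed

lemma closed_form_bound_parity:
  fixes X :: "nat \<Rightarrow> real" and \<phi> \<rho> \<phi>2 c :: real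
  defines "R1 \<equiv> (1 + \<phi>) / (\<phi> + \<rho>)" and "R2 \<equiv> (1 - \<rho>) / (\<phi> + \<rho>)"
  defines "R3 \<equiv> (\<rho> + \<phi>2) / (\<phi> + \<rho>)" and "R4 \<equiv> (\<phi> - \<phi>2) / (\<phi> + \<rho>)"
  assumes "\<phi> * \<rho> = \<phi>2" and X: "\<And>n. X n \<le> (R1 * \<rho> ^ n - R2 * (- \<phi>) ^ n) * c"
  shows "even k \<Longrightarrow> X (k + 1) \<le> (R1 * \<rho> ^ (k + 1) + R2 * \<phi> ^ (k + 1)) * c
      \<and> X k \<le> (R1 * \<rho> ^ k - R2 * \<phi> ^ k) * c"
    and "odd k \<Longrightarrow> X (k + 1) \<le> (R3 * \<rho> ^ k - R4 * \<phi> ^ k) * c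
      \<and> X k \<le> (R3 * \<rho> ^ (k - 1) + R4 * \<phi> ^ (k - 1)) * c"
proof -
  assume "even k"
  thus "X (k + 1) \<le> (R1 * \<rho> ^ (k + 1) + R2 * \<phi> ^ (k + 1)) * c \<and> X k \<le> (R1 * \<rho> ^ k - R2 * \<phi> ^ k) * c"
    using X[of k] X[of "k + 1"] by simp
next
  assume "odd k"
  then obtain j where k: "k = Suc j" "even j" by (cases k) auto
  have "R3 = R1 * \<rho>" "R4 = R2 * \<phi>"
    unfolding R1_def R2_def R3_def R4_def using assms(5) by (simp_all add: algebra_simps)
  thus "X (k + 1) \<le> (R3 * \<rho> ^ k - R4 * \<phi> ^ k) * c \<and> X k \<le> (R3 * \<rho> ^ (k - 1) + R4 * \<phi> ^ (k - 1)) * c"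
    using X[of k] X[of "k + 1"] k by (simp add: algebra_simps)
qed

lemma sum_le_geometric_bound:
  fixes X :: "nat \<Rightarrow> real"
  assumes "\<And>n. X (n + 1) \<le> \<rho> ^ n * B" "0 \<le> \<rho>" "\<rho> < 1" "0 \<le> B"
  shows "(\<Sum>l=1..k. X l) \<le> B / (1 - \<rho>)"
proof -
  have "(\<Sum>l=1..k. X l) = (\<Sum>n<k. X (n + 1))"
    by (rule sum.reindex_bij_witness[of _ "\<lambda>n. n + 1" "\<lambda>l. l - 1"]) auto
  also have "\<dots> \<le> (\<Sum>n<k. \<rho> ^ n * B)" by (rule sum_mono) (rule assms(1))
  also have "\<dots> = (\<Sum>n<k. \<rho> ^ n) * B" by (simp add: sum_distrib_right)
  also have "(\<Sum>n<k. \<rho> ^ n) = (1 - \<rho> ^ k) / (1 - \<rho>)" using assms(3) by (simp add: sum_gp_strict)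
  also have "(1 - \<rho> ^ k) / (1 - \<rho>) * B \<le> 1 / (1 - \<rho>) * B"
    using assms(2-4) by (intro mult_right_mono divide_right_mono) auto
  finally show ?thesis by simp
qed

lemma geometric_bound_imp_LIMSEQ_zero:
  fixes X :: "nat \<Rightarrow> real"
  assumes "\<And>n. 0 \<le> X n" "\<And>n. X (n + 1) \<le> \<rho> ^ n * B" "0 \<le> \<rho>" "\<rho> < 1"
  shows "X \<longlonglongrightarrow> 0"
proof -
  have lim: "(\<lambda>n. \<rho> ^ n * B) \<longlonglongrightarrow> 0"
    using assms(3,4) by (auto intro!: tendsto_eq_intros LIMSEQ_power_zero)
  have "(\<lambda>n. X (Suc n)) \<longlonglongrightarrow> 0"
    by (rule tendsto_sandwich[OF _ _ tendsto_const lim]) (use assms(1,2) in auto)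
  thus ?thesis by (rule LIMSEQ_imp_Suc)
qed

section \<open>Expected distances along the iterates\<close>

locale gskm =
  fixes m \<beta> :: nat and a :: "nat \<Rightarrow> real^'n" and b :: "nat \<Rightarrow> real"
    and \<delta> \<xi> :: real and x0 :: "real^'n"
  assumes beta: "1 \<le> \<beta>" "\<beta> \<le> m"
    and rows_normalized: "\<forall>i<m. norm (a i) = 1"
    and consistent: "feas m a b \<noteq> {}"
    and delta: "0 < \<delta>" "\<delta> < 2"
    and xi: "0 \<le> \<xi>" "\<xi> \<le> 1"
begin

definition mean_dist_x :: "nat \<Rightarrow> real" where
  "mean_dist_x k = Exp m \<beta> k (\<lambda>ts. (infdist (gskm_x a b \<delta> \<xi> x0 ts k) (feas m a b))\<^sup>2)"

definition mean_dist_z :: "nat \<Rightarrow> real" where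
  "mean_dist_z k = Exp m \<beta> k (\<lambda>ts. (infdist (gskm_z a b \<delta> \<xi> x0 ts k) (feas m a b))\<^sup>2)"

definition mean_fobj_x :: "nat \<Rightarrow> real" where
  "mean_fobj_x k = Exp m \<beta> k (\<lambda>ts. fobj m \<beta> a b (gskm_x a b \<delta> \<xi> x0 ts k))"

lemma mean_dist_x_0: "mean_dist_x 0 = (infdist x0 (feas m a b))\<^sup>2"
  and mean_dist_x_1: "mean_dist_x 1 = (infdist x0 (feas m a b))\<^sup>2"
  by (simp_all add: mean_dist_x_def Exp_const beta gskm_x_def)

lemma mean_dist_x_nonneg: "0 \<le> mean_dist_x k"
  unfolding mean_dist_x_def using Exp_mono[OF beta(2), of k "\<lambda>_. 0"] by (simp add: Exp_const beta)

lemma mean_dist_z_nonneg: "0 \<le> mean_dist_z k"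
  unfolding mean_dist_z_def using Exp_mono[OF beta(2), of k "\<lambda>_. 0"] by (simp add: Exp_const beta)

lemma mean_fobj_x_nonneg: "0 \<le> mean_fobj_x k"
  unfolding mean_fobj_x_def using Exp_mono[OF beta(2), of k "\<lambda>_. 0"] by (simp add: Exp_const beta fobj_nonneg)

lemma mean_dist_z_le:
  assumes "1 \<le> k"
  shows "mean_dist_z k \<le> mean_dist_x k - (2 * \<delta> - \<delta>\<^sup>2) * (2 * mean_fobj_x k)"
proof -
  obtain N where k: "k = Suc N" using assms by (cases k) auto
  let ?x = "gskm_x a b \<delta> \<xi> x0" and ?P = "feas m a b" and ?U = "subsets_of m \<beta>"
  have "mean_dist_z k = Exp m \<beta> N (\<lambda>ts. (\<Sum>\<tau>\<in>?U. (infdist (skm_step a b \<delta> \<tau> (?x ts k)) ?P)\<^sup>2) / card ?U)"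
    unfolding mean_dist_z_def k
    by (rule Exp_Suc_eq[OF beta(2)]) (simp add: gskm_z_def gskm_x_append nth_append)
  also have "\<dots> \<le> Exp m \<beta> N (\<lambda>ts. (infdist (?x ts k) ?P)\<^sup>2 - (2 * \<delta> - \<delta>\<^sup>2) * (2 * fobj m \<beta> a b (?x ts k)))"
    using mean_infdist_skm_step_sq_le[OF consistent rows_normalized beta] delta
    by (intro Exp_mono[OF beta(2)]) auto
  also have "\<dots> = Exp m \<beta> N (\<lambda>ts. (infdist (?x ts k) ?P)\<^sup>2)
      - (2 * \<delta> - \<delta>\<^sup>2) * (2 * Exp m \<beta> N (\<lambda>ts. fobj m \<beta> a b (?x ts k)))"
    by (simp add: Exp_diff Exp_cmult beta)
  also have "Exp m \<beta> N (\<lambda>ts. (infdist (?x ts k) ?P)\<^sup>2) = mean_dist_x k"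
    unfolding mean_dist_x_def k by (rule Exp_gskm_x_prefix[OF beta(2), symmetric]) auto
  also have "Exp m \<beta> N (\<lambda>ts. fobj m \<beta> a b (?x ts k)) = mean_fobj_x k"
    unfolding mean_fobj_x_def k by (rule Exp_gskm_x_prefix[OF beta(2), symmetric]) auto
  finally show ?thesis .
qed

lemma mean_fobj_x_le: "2 * mean_fobj_x k \<le> min 1 (real \<beta> / real m * lambda_max (AtA m a)) * mean_dist_x k"
proof -
  let ?\<mu>2 = "min 1 (real \<beta> / real m * lambda_max (AtA m a))"
  have "2 * fobj m \<beta> a b y \<le> ?\<mu>2 * (infdist y (feas m a b))\<^sup>2" for y
    using fobj_le_infdist_sq[OF consistent rows_normalized beta, of y]
      fobj_le_lambda_max_infdist_sq[OF consistent beta, of y]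
    by (simp add: min_def)
  hence "Exp m \<beta> k (\<lambda>ts. 2 * fobj m \<beta> a b (gskm_x a b \<delta> \<xi> x0 ts k))
      \<le> Exp m \<beta> k (\<lambda>ts. ?\<mu>2 * (infdist (gskm_x a b \<delta> \<xi> x0 ts k) (feas m a b))\<^sup>2)"
    by (intro Exp_mono[OF beta(2)])
  thus ?thesis by (simp add: mean_fobj_x_def mean_dist_x_def Exp_cmult beta)
qed

lemma mean_dist_x_Suc_Suc_le:
  "mean_dist_x (n + 2) \<le> (1 - \<xi>) * mean_dist_z (n + 1) + \<xi> * mean_dist_z (max 1 n)"
proof -
  let ?z = "gskm_z a b \<delta> \<xi> x0" and ?P = "feas m a b"
  have "mean_dist_x (n + 2)
      \<le> Exp m \<beta> (n + 2) (\<lambda>ts. (1 - \<xi>) * (infdist (?z ts (n + 1)) ?P)\<^sup>2 + \<xi> * (infdist (?z ts (max 1 n)) ?P)\<^sup>2)"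
    unfolding mean_dist_x_def gskm_x_Suc_Suc using convex_on_infdist_feas_sq[OF consistent] xi
    by (intro Exp_mono[OF beta(2)] convex_onD[where A=UNIV]) auto
  also have "\<dots> = (1 - \<xi>) * Exp m \<beta> (n + 2) (\<lambda>ts. (infdist (?z ts (n + 1)) ?P)\<^sup>2)
      + \<xi> * Exp m \<beta> (n + 2) (\<lambda>ts. (infdist (?z ts (max 1 n)) ?P)\<^sup>2)"
    by (simp add: Exp_add Exp_cmult beta)
  also have "\<dots> = (1 - \<xi>) * mean_dist_z (n + 1) + \<xi> * mean_dist_z (max 1 n)"
    unfolding mean_dist_z_def
    using Exp_gskm_z_prefix[OF beta(2), where l="n + 1" and M="n + 1" and N="n + 2"
        and G="\<lambda>y. (infdist y ?P)\<^sup>2"]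
      Exp_gskm_z_prefix[OF beta(2), where l="max 1 n" and M="max 1 n" and N="n + 2"
        and G="\<lambda>y. (infdist y ?P)\<^sup>2"]
    by simp
  finally show ?thesis .
qed

context
  fixes L :: real
  assumes L_pos: "0 < L"
    and hoffman: "\<forall>y. (infdist y (feas m a b))\<^sup>2 \<le> L\<^sup>2 * (\<Sum>i<m. (resid a b y i)\<^sup>2)"
begin

lemma mean_dist_z_le_contraction:
  assumes "1 \<le> k"
  shows "mean_dist_z k \<le> (1 - (2 * \<delta> - \<delta>\<^sup>2) * (1 / (real m * L\<^sup>2))) * mean_dist_x k"
proof -
  let ?\<mu>1 = "1 / (real m * L\<^sup>2)"
  have "?\<mu>1 * (infdist y (feas m a b))\<^sup>2 \<le> 2 * fobj m \<beta> a b y" for y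
  proof -
    have "?\<mu>1 * (infdist y (feas m a b))\<^sup>2 \<le> ?\<mu>1 * (L\<^sup>2 * (\<Sum>i<m. (resid a b y i)\<^sup>2))"
      using hoffman by (intro mult_left_mono) auto
    also have "\<dots> = (\<Sum>i<m. (resid a b y i)\<^sup>2) / m" using L_pos by simp
    also have "\<dots> \<le> 2 * fobj m \<beta> a b y" by (rule sum_resid_sq_le_fobj[OF beta])
    finally show ?thesis .
  qed
  hence "?\<mu>1 * mean_dist_x k \<le> 2 * mean_fobj_x k"
    unfolding mean_dist_x_def mean_fobj_x_def
    by (simp add: Exp_cmult[OF beta(2), symmetric] Exp_mono[OF beta(2)])
  moreover have "0 \<le> 2 * \<delta> - \<delta>\<^sup>2" using delta by (simp add: power2_eq_square)
  ultimately have "(2 * \<delta> - \<delta>\<^sup>2) * (?\<mu>1 * mean_dist_x k) \<le> (2 * \<delta> - \<delta>\<^sup>2) * (2 * mean_fobj_x k)"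
    by (rule mult_left_mono)
  moreover have "(1 - (2 * \<delta> - \<delta>\<^sup>2) * ?\<mu>1) * mean_dist_x k
      = mean_dist_x k - (2 * \<delta> - \<delta>\<^sup>2) * (?\<mu>1 * mean_dist_x k)"
    by (simp only: left_diff_distrib mult_1_left mult.assoc)
  ultimately show ?thesis using mean_dist_z_le[OF assms] by linarith
qed

lemma mean_dist_x_recurrence:
  defines "h \<equiv> 1 - (2 * \<delta> - \<delta>\<^sup>2) * (1 / (real m * L\<^sup>2))"
  shows "mean_dist_x (n + 2) \<le> (1 - \<xi>) * h * mean_dist_x (n + 1) + \<xi> * h * mean_dist_x n"
proof -
  have "mean_dist_x (n + 2) \<le> (1 - \<xi>) * mean_dist_z (n + 1) + \<xi> * mean_dist_z (max 1 n)"
    by (rule mean_dist_x_Suc_Suc_le)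
  also have "\<dots> \<le> (1 - \<xi>) * (h * mean_dist_x (n + 1)) + \<xi> * (h * mean_dist_x (max 1 n))"
    unfolding h_def using mean_dist_z_le_contraction xi by (intro add_mono mult_left_mono) auto
  finally have "mean_dist_x (n + 2) \<le> (1 - \<xi>) * (h * mean_dist_x (n + 1)) + \<xi> * (h * mean_dist_x (max 1 n))" .
  moreover have "mean_dist_x (max 1 n) = mean_dist_x n"
  proof (cases "n = 0")
    case True
    thus ?thesis using mean_dist_x_0 mean_dist_x_1 by simp
  qed (simp add: max_def)
  ultimately show ?thesis by (simp add: algebra_simps)
qed

end

lemma sum_mean_dist_x_minus_z_le:
  "(\<Sum>l=1..k. mean_dist_x l - mean_dist_z l) \<le> (1 + \<xi>) * (infdist x0 (feas m a b))\<^sup>2"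
proof -
  let ?X = mean_dist_x and ?D = mean_dist_z and ?d0 = "(infdist x0 (feas m a b))\<^sup>2"
  \<comment> \<open>non-increasing in j, by the recursion for x\<close>
  have tele: "(\<Sum>l=1..j+1. ?X l - ?D l) + ?D (j + 1) + \<xi> * ?D (max 1 j) \<le> ?d0 + \<xi> * ?D 1" for j
  proof (induction j)
    case 0
    show ?case using mean_dist_x_1 by simp
  next
    case (Suc j)
    have "?X (j + 2) \<le> (1 - \<xi>) * ?D (j + 1) + \<xi> * ?D (max 1 j)" by (rule mean_dist_x_Suc_Suc_le)
    moreover have "(\<Sum>l=1..Suc j + 1. ?X l - ?D l) = (\<Sum>l=1..j+1. ?X l - ?D l) + (?X (j + 2) - ?D (j + 2))"
      by simp
    moreover have "(1 - \<xi>) * ?D (j + 1) = ?D (j + 1) - \<xi> * ?D (j + 1)" by (simp add: algebra_simps)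
    ultimately show ?case using Suc.IH by simp
  qed
  have "?D 1 \<le> ?X 1 - (2 * \<delta> - \<delta>\<^sup>2) * (2 * mean_fobj_x 1)" by (rule mean_dist_z_le) simp
  moreover have "0 \<le> (2 * \<delta> - \<delta>\<^sup>2) * (2 * mean_fobj_x 1)"
    using delta mean_fobj_x_nonneg by (simp add: power2_eq_square)
  ultimately have "?D 1 \<le> ?d0" using mean_dist_x_1 by linarith
  hence "\<xi> * ?D 1 \<le> \<xi> * ?d0" using xi(1) by (rule mult_left_mono)
  show ?thesis
  proof (cases k)
    case (Suc j)
    thus ?thesis
      using tele[of j] mean_dist_z_nonneg[of k] mult_nonneg_nonneg[OF xi(1) mean_dist_z_nonneg[of "max 1 j"]]
        \<open>\<xi> * ?D 1 \<le> \<xi> * ?d0\<close>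
      by (simp add: algebra_simps)
  qed (simp add: xi)
qed

lemma sum_mean_fobj_x_le:
  "2 * (2 * \<delta> - \<delta>\<^sup>2) * (\<Sum>l=1..k. mean_fobj_x l) \<le> (1 + \<xi>) * (infdist x0 (feas m a b))\<^sup>2"
proof -
  have "2 * (2 * \<delta> - \<delta>\<^sup>2) * (\<Sum>l=1..k. mean_fobj_x l) = (\<Sum>l=1..k. (2 * \<delta> - \<delta>\<^sup>2) * (2 * mean_fobj_x l))"
    unfolding sum_distrib_left by (simp only: mult_ac)
  also have "\<dots> \<le> (\<Sum>l=1..k. mean_dist_x l - mean_dist_z l)"
    using mean_dist_z_le by (intro sum_mono) (simp add: algebra_simps)
  also have "\<dots> \<le> (1 + \<xi>) * (infdist x0 (feas m a b))\<^sup>2"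
    by (rule sum_mean_dist_x_minus_z_le)
  finally show ?thesis .
qed

lemma Exp_average_le:
  assumes "convex_on UNIV g" "1 \<le> k"
  shows "Exp m \<beta> k (\<lambda>ts. g ((1 / real k) *\<^sub>R (\<Sum>l=1..k. gskm_x a b \<delta> \<xi> x0 ts l)))
    \<le> (\<Sum>l=1..k. Exp m \<beta> l (\<lambda>ts. g (gskm_x a b \<delta> \<xi> x0 ts l))) / k"
proof -
  let ?x = "gskm_x a b \<delta> \<xi> x0"
  have "Exp m \<beta> k (\<lambda>ts. g ((1 / real k) *\<^sub>R (\<Sum>l=1..k. ?x ts l)))
      \<le> Exp m \<beta> k (\<lambda>ts. \<Sum>l=1..k. 1 / real k * g (?x ts l))"
  proof (intro Exp_mono[OF beta(2)])
    fix ts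
    show "g ((1 / real k) *\<^sub>R (\<Sum>l=1..k. ?x ts l)) \<le> (\<Sum>l=1..k. 1 / real k * g (?x ts l))"
      unfolding scaleR_sum_right using assms by (intro convex_on_sum) auto
  qed
  also have "\<dots> = (\<Sum>l=1..k. 1 / real k * Exp m \<beta> k (\<lambda>ts. g (?x ts l)))"
    unfolding Exp_sum[OF beta(2)] Exp_cmult[OF beta(2)] ..
  also have "\<dots> = (\<Sum>l=1..k. 1 / real k * Exp m \<beta> l (\<lambda>ts. g (?x ts l)))"
    by (intro sum.cong refl arg_cong2[where f="(*)"] Exp_gskm_x_prefix[OF beta(2)]) auto
  also have "\<dots> = (\<Sum>l=1..k. Exp m \<beta> l (\<lambda>ts. g (?x ts l))) / k"
    by (simp add: sum_divide_distrib)
  finally show ?thesis .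
qed

lemma mean_dist_average_le:
  assumes "1 \<le> k"
  shows "Exp m \<beta> k (\<lambda>ts. (infdist ((1 / real k) *\<^sub>R (\<Sum>l=1..k. gskm_x a b \<delta> \<xi> x0 ts l)) (feas m a b))\<^sup>2)
    \<le> (\<Sum>l=1..k. mean_dist_x l) / k"
  unfolding mean_dist_x_def by (rule Exp_average_le[OF convex_on_infdist_feas_sq[OF consistent] assms])

lemma mean_fobj_average_le:
  assumes "1 \<le> k"
  shows "Exp m \<beta> k (\<lambda>ts. fobj m \<beta> a b ((1 / real k) *\<^sub>R (\<Sum>l=1..k. gskm_x a b \<delta> \<xi> x0 ts l)))
    \<le> (1 + \<xi>) * (infdist x0 (feas m a b))\<^sup>2 / (2 * \<delta> * real k * (2 - \<delta>))"
proof -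
  have "0 < 2 * \<delta> * (2 - \<delta>)" using delta by simp
  hence "(\<Sum>l=1..k. mean_fobj_x l) \<le> (1 + \<xi>) * (infdist x0 (feas m a b))\<^sup>2 / (2 * \<delta> * (2 - \<delta>))"
    using sum_mean_fobj_x_le[of k] by (simp add: field_simps power2_eq_square)
  hence "(\<Sum>l=1..k. mean_fobj_x l) / k \<le> (1 + \<xi>) * (infdist x0 (feas m a b))\<^sup>2 / (2 * \<delta> * (2 - \<delta>)) / k"
    by (rule divide_right_mono) simp
  moreover have "Exp m \<beta> k (\<lambda>ts. fobj m \<beta> a b ((1 / real k) *\<^sub>R (\<Sum>l=1..k. gskm_x a b \<delta> \<xi> x0 ts l)))
      \<le> (\<Sum>l=1..k. mean_fobj_x l) / k"
    unfolding mean_fobj_x_def by (rule Exp_average_le[OF convex_on_fobj[OF beta] assms])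
  ultimately show ?thesis by (simp add: field_simps)
qed

end

theorem theorem3:
  fixes m \<beta> :: nat and a :: "nat \<Rightarrow> real^'n" and b :: "nat \<Rightarrow> real"
    and L \<delta> \<xi> :: real and x0 :: "real^'n"
  defines "P \<equiv> feas m a b"
  defines "x \<equiv> gskm_x a b \<delta> \<xi> x0"
  defines "d0 \<equiv> infdist x0 P"
  defines "\<mu>1 \<equiv> 1 / (real m * L\<^sup>2)"
  defines "\<mu>2 \<equiv> min 1 (real \<beta> / real m * lambda_max (AtA m a))"
  defines "\<eta> \<equiv> 2 * \<delta> - \<delta>\<^sup>2"
  defines "h \<equiv> 1 - \<eta> * \<mu>1"
  defines "\<phi>1 \<equiv> (1 - \<xi>) * h"
  defines "\<phi>2 \<equiv> \<xi> * h"
  defines "\<phi> \<equiv> (- \<phi>1 + sqrt (\<phi>1\<^sup>2 + 4 * \<phi>2)) / 2"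
  defines "\<rho> \<equiv> \<phi> + \<phi>1"
  defines "R1 \<equiv> (1 + \<phi>) / (\<phi> + \<rho>)"
  defines "R2 \<equiv> (1 - \<rho>) / (\<phi> + \<rho>)"
  defines "R3 \<equiv> (\<rho> + \<phi>2) / (\<phi> + \<rho>)"
  defines "R4 \<equiv> (\<phi> - \<phi>2) / (\<phi> + \<rho>)"
  assumes m_pos: "1 \<le> m"
    and beta: "1 \<le> \<beta>" "\<beta> \<le> m"
    and rows_normalized: "\<forall>i<m. norm (a i) = 1"
    and consistent: "P \<noteq> {}"
    and L_pos: "L > 0"
    and hoffman: "\<forall>y. (infdist y P)\<^sup>2 \<le> L\<^sup>2 * (\<Sum>i<m. (resid a b y i)\<^sup>2)"
    and delta: "0 < \<delta>" "\<delta> < 2"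
    and xi: "0 \<le> \<xi>" "\<xi> \<le> 1"
    and h_pos: "h > 0"
  shows
    "(\<lambda>k. Exp m \<beta> k (\<lambda>ts. (infdist (x ts k) P)\<^sup>2)) \<longlonglongrightarrow> 0
   \<and> (0 \<le> \<phi> \<and> \<phi> < 1 \<and> 0 \<le> \<phi>1 \<and> \<phi>1 < 1 \<and> 0 \<le> \<phi>2 \<and> \<phi>2 < 1 \<and> 0 < \<rho> \<and> \<rho> < 1)
   \<and> (\<forall>k\<ge>1.
        Exp m \<beta> (k + 1) (\<lambda>ts. (infdist (x ts (k + 1)) P)\<^sup>2) \<le> \<rho> ^ k * (1 + \<phi>) * d0\<^sup>2
      \<and> Exp m \<beta> (k + 1) (\<lambda>ts. fobj m \<beta> a b (x ts (k + 1))) \<le> \<mu>2 * (1 + \<phi>) / 2 * \<rho> ^ k * d0\<^sup>2)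
   \<and> (\<forall>k\<ge>1. even k \<longrightarrow>
        Exp m \<beta> (k + 1) (\<lambda>ts. (infdist (x ts (k + 1)) P)\<^sup>2) \<le> (R1 * \<rho> ^ (k + 1) + R2 * \<phi> ^ (k + 1)) * d0\<^sup>2
      \<and> Exp m \<beta> k (\<lambda>ts. (infdist (x ts k) P)\<^sup>2) \<le> (R1 * \<rho> ^ k - R2 * \<phi> ^ k) * d0\<^sup>2)
   \<and> (\<forall>k\<ge>1. odd k \<longrightarrow>
        Exp m \<beta> (k + 1) (\<lambda>ts. (infdist (x ts (k + 1)) P)\<^sup>2) \<le> (R3 * \<rho> ^ k - R4 * \<phi> ^ k) * d0\<^sup>2
      \<and> Exp m \<beta> k (\<lambda>ts. (infdist (x ts k) P)\<^sup>2) \<le> (R3 * \<rho> ^ (k - 1) + R4 * \<phi> ^ (k - 1)) * d0\<^sup>2)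
   \<and> (\<forall>k\<ge>1.
        Exp m \<beta> k (\<lambda>ts. (infdist ((1 / real k) *\<^sub>R (\<Sum>l=1..k. x ts l)) P)\<^sup>2)
          \<le> (1 + \<phi>) * d0\<^sup>2 / (real k * (1 - \<rho>))
      \<and> Exp m \<beta> k (\<lambda>ts. fobj m \<beta> a b ((1 / real k) *\<^sub>R (\<Sum>l=1..k. x ts l)))
          \<le> (1 + \<xi>) * d0\<^sup>2 / (2 * \<delta> * real k * (2 - \<delta>)))"
proof -
  interpret G: gskm m \<beta> a b \<delta> \<xi> x0
    using beta rows_normalized consistent delta xi unfolding P_def by unfold_locales auto
  let ?X = G.mean_dist_x
  have "h < 1" using delta m_pos L_pos unfolding h_def \<eta>_def \<mu>1_def by (simp add: power2_eq_square)
  have rates: "0 \<le> \<phi> \<and> \<phi> < 1 \<and> 0 \<le> \<phi>1 \<and> \<phi>1 < 1 \<and> 0 \<le> \<phi>2 \<and> \<phi>2 < 1 \<and> 0 < \<rho> \<and> \<rho> < 1 \<and> \<phi> * \<rho> = \<phi>2"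
    unfolding \<rho>_def \<phi>_def \<phi>1_def \<phi>2_def by (rule gskm_rate_constants[OF h_pos \<open>h < 1\<close> xi])
  have "\<rho> = \<phi> + \<phi>1" unfolding \<rho>_def ..
  have rec: "?X (n + 2) \<le> \<phi>1 * ?X (n + 1) + \<phi>2 * ?X n" for n
    using G.mean_dist_x_recurrence[OF L_pos hoffman[unfolded P_def]]
    unfolding \<phi>1_def \<phi>2_def h_def \<eta>_def \<mu>1_def by simp
  have init: "?X 0 \<le> d0\<^sup>2" "?X 1 \<le> d0\<^sup>2"
    using G.mean_dist_x_0 G.mean_dist_x_1 unfolding d0_def P_def by simp_all
  have geometric: "?X (n + 1) \<le> \<rho> ^ n * (1 + \<phi>) * d0\<^sup>2" for n
    using rates G.mean_dist_x_nonneg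
    by (intro linear_recurrence_geometric_bound[OF _ _ \<open>\<rho> = _\<close> _ _ init rec]) auto
  have closed_form: "?X n \<le> (R1 * \<rho> ^ n - R2 * (- \<phi>) ^ n) * d0\<^sup>2" for n
    unfolding R1_def R2_def using rates
    by (intro linear_recurrence_closed_form_bound[OF _ _ _ \<open>\<rho> = _\<close> _ init rec]) auto
  have "0 \<le> \<mu>2" unfolding \<mu>2_def using lambda_max_AtA_nonneg[of m a] by simp
  have "?X \<longlonglongrightarrow> 0"
    using geometric[unfolded mult.assoc] G.mean_dist_x_nonneg rates
    by (intro geometric_bound_imp_LIMSEQ_zero) auto
  moreover have "G.mean_fobj_x (k + 1) \<le> \<mu>2 * (1 + \<phi>) / 2 * \<rho> ^ k * d0\<^sup>2" for k
    using G.mean_fobj_x_le[of "k + 1", folded \<mu>2_def] mult_left_mono[OF geometric[of k] \<open>0 \<le> \<mu>2\<close>]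
    by (simp add: algebra_simps)
  moreover have "Exp m \<beta> k (\<lambda>ts. (infdist ((1 / real k) *\<^sub>R (\<Sum>l=1..k. x ts l)) P)\<^sup>2)
      \<le> (1 + \<phi>) * d0\<^sup>2 / (real k * (1 - \<rho>))" if "1 \<le> k" for k
  proof -
    have "(\<Sum>l=1..k. ?X l) / k \<le> (1 + \<phi>) * d0\<^sup>2 / (1 - \<rho>) / k"
      using geometric[unfolded mult.assoc] rates by (intro divide_right_mono sum_le_geometric_bound) auto
    thus ?thesis using G.mean_dist_average_le[OF that] unfolding x_def P_def by (simp add: field_simps)
  qed
  ultimately show ?thesis
    using rates geometric closed_form_bound_parity[of \<phi> \<rho> \<phi>2 ?X, OF _ closed_form[unfolded R1_def R2_def]]
      G.mean_fobj_average_le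
    unfolding G.mean_dist_x_def G.mean_fobj_x_def R1_def R2_def R3_def R4_def x_def P_def d0_def
    by auto
qed

end
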